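(* Let $V\ge 0$ be an integrable random variable with mean $\mu=\mathbb{E}[V]$ and let $c\ge 0$. Let $u^{\mathsf{rsv}}, u^{\mathsf{bkp}}, W^{\mathsf{OI}}, W^{\mathsf{NOI}}$ be as defined in the context. Then for every $r\in\mathbb{R}$, \[ \min\{c+\mathbb{E}[\min\{V,r\}],\ r\}=\mathbb{E}[\min\{W^{\mathsf{OI}},r\}], \qquad \min\{c+\mathbb{E}[\min\{V,r\}],\ r,\ \mu\}=\mathbb{E}[\min\{W^{\mathsf{NOI}},r\}]. \] (The left-hand sides are the optimal expected costs of choosing between one item with price $V$ and inspection cost $c$ and an outside option of known cost $r$, under obligatory and nonobligatory inspection respectively.)
   Context: An item has inspection cost $c\ge 0$ and a random hidden price $V\ge 0$ with finite mean $\mu=\mathbb{E}[V]$. Its reservation price $u^{\mathsf{rsv}}$ and backup price $u^{\mathsf{bkp}}$ are defined by $\mathbb{E}[(u^{\mathsf{rsv}}-V)^+]=c$ and $\mathbb{E}[(V-u^{\mathsf{bkp}})^+]=c$ (when $c>0$ these solutions are unique; in general take $u^{\mathsf{rsv}}=\sup\{u:\mathbb{E}[(u-V)^+]\le c\}$ and $u^{\mathsf{bkp}}=\inf\{u:\mathbb{E}[(V-u)^+]\le c\}$, possibly $+\infty$). The obligatory-inspection surrogate price is the random variable $W^{\mathsf{OI}}=\max\{V,u^{\mathsf{rsv}}\}$. The nonobligatory-inspection surrogate price is the random variable $W^{\mathsf{NOI}}=\min\{W^{\mathsf{OI}},u^{\mathsf{bkp}}\}$ if $u^{\mathsf{rsv}}<u^{\mathsf{bkp}}$,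 and $W^{\mathsf{NOI}}=\mu$ (deterministically) if $u^{\mathsf{rsv}}\ge u^{\mathsf{bkp}}$. *)

theory Defs
  imports "HOL-Probability.Probability"
begin

definition rsv_price :: "'a measure \<Rightarrow> ('a \<Rightarrow> real) \<Rightarrow> real \<Rightarrow> ereal" where
  "rsv_price M V c = Sup {ereal u | u. (\<integral>x. max (u - V x) 0 \<partial>M) \<le> c}"

text \<open>Backup price: inf of u with E[(V - u)^+] \<le> c, taken in the extended reals
  (it is +\<infinity> if no such real u exists).\<close>
definition bkp_price :: "'a measure \<Rightarrow> ('a \<Rightarrow> real) \<Rightarrow> real \<Rightarrow> ereal" where
  "bkp_price M V c = Inf {ereal u | u. (\<integral>x. max (V x - u) 0 \<partial>M) \<le> c}"

definition W_OI :: "'a measure \<Rightarrow> ('a \<Rightarrow> real) \<Rightarrow> real \<Rightarrow> 'a \<Rightarrow> real" where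
  "W_OI M V c x = real_of_ereal (max (ereal (V x)) (rsv_price M V c))"

definition W_NOI :: "'a measure \<Rightarrow> ('a \<Rightarrow> real) \<Rightarrow> real \<Rightarrow> 'a \<Rightarrow> real" where
  "W_NOI M V c x =
     (if rsv_price M V c < bkp_price M V c
      then real_of_ereal (min (max (ereal (V x)) (rsv_price M V c)) (bkp_price M V c))
      else (\<integral>y. V y \<partial>M))"

end

theory Submission
  imports Defs
begin

text \<open>Write \<open>h s = E[min V s]\<close> for the truncated mean; it is nondecreasing and 1-Lipschitz.
  Since \<open>E[(s - V)\<^sup>+] = s - h s\<close> is nondecreasing and \<open>E[(V - s)\<^sup>+] = \<mu> - h s\<close> is
  nonincreasing, both continuous, the reservation price is the largest \<open>u\<close> with \<open>u - h u = c\<close>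
  and the backup price the smallest \<open>b\<close> with \<open>\<mu> - h b = c\<close> (or \<open>\<infinity>\<close> if there is none).
  Pointwise \<open>min (max V u) s = min V s + (u - V)\<^sup>+\<close> for \<open>u < s\<close>, so capping the obligatory
  surrogate at \<open>s > u\<close> has mean \<open>h s + (u - h u) = c + h s\<close>, while for \<open>s \<le> u\<close> it is
  constantly \<open>s\<close>; this is the first identity. For the second, capping additionally at \<open>b\<close>
  gives the mean \<open>h b + c = \<mu>\<close> for \<open>s > b\<close>, and if \<open>b \<le> u\<close> then
  \<open>min (c + h s) s \<ge> min \<mu> s\<close> for every \<open>s\<close>, so the constant \<open>\<mu>\<close> is the right surrogate.\<close>

lemma sublevel_set_eq_atMost:
  fixes g :: "real \<Rightarrow> real"
  assumes "mono g" "continuous_on UNIV g" "g a \<le> c" "bdd_above {u. g u \<le> c}"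
  obtains s where "g s = c" "{u. g u \<le> c} = {..s}"
proof -
  define S where "S = {u. g u \<le> c}"
  have "closed S"
    unfolding S_def using assms(2) by (intro closed_Collect_le continuous_on_const)
  then have "Sup S \<in> S"
    using assms(3,4) by (intro closed_contains_Sup) (auto simp: S_def)
  have S_eq: "S = {..Sup S}"
  proof
    show "S \<subseteq> {..Sup S}"
      using assms(4) by (auto simp: S_def intro: cSup_upper)
    show "{..Sup S} \<subseteq> S"
    proof
      fix u assume "u \<in> {..Sup S}"
      then have "g u \<le> g (Sup S)"
        using assms(1) by (simp add: monoD)
      with \<open>Sup S \<in> S\<close> show "u \<in> S"
        by (simp add: S_def)
    qed
  qed
  then have "Sup S + 1 \<notin> S"
    by (metis atMost_iff less_add_one not_le)
  then have "c \<le> g (Sup S + 1)"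
    by (simp add: S_def)
  moreover have "g (Sup S) \<le> c"
    using \<open>Sup S \<in> S\<close> by (simp add: S_def)
  ultimately obtain t where "Sup S \<le> t" "g t = c"
    using IVT'[of g "Sup S" c "Sup S + 1"] continuous_on_subset[OF assms(2)] by auto
  moreover have "t \<le> Sup S"
    using S_eq \<open>g t = c\<close> by (auto simp: S_def)
  ultimately show thesis
    using that S_eq by (simp add: S_def)
qed

lemma sublevel_set_eq_atLeast:
  fixes g :: "real \<Rightarrow> real"
  assumes "antimono g" "continuous_on UNIV g" "g a \<le> c" "bdd_below {u. g u \<le> c}"
  obtains b where "g b = c" "{u. g u \<le> c} = {b..}"
proof -
  obtain m where m: "\<And>u. g u \<le> c \<Longrightarrow> m \<le> u"
    using assms(4) by (auto simp: bdd_below_def)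
  have "bdd_above {v. g (- v) \<le> c}"
  proof (rule bdd_aboveI[where M = "- m"])
    fix v assume "v \<in> {v. g (- v) \<le> c}"
    then have "m \<le> - v"
      by (simp add: m)
    then show "v \<le> - m"
      by linarith
  qed
  moreover have "mono (\<lambda>v. g (- v))"
    using assms(1) by (auto simp: mono_def antimono_def)
  moreover have "continuous_on UNIV (\<lambda>v. g (- v))"
    by (intro continuous_on_compose2[OF assms(2) continuous_on_minus[OF continuous_on_id]]) simp
  ultimately obtain s where "g (- s) = c" "{v. g (- v) \<le> c} = {..s}"
    using sublevel_set_eq_atMost[of "\<lambda>v. g (- v)" "- a" c] assms(3) by auto
  then have "g u \<le> c \<longleftrightarrow> - s \<le> u" for u
    by (metis (mono_tags, lifting) atMost_iff mem_Collect_eq minus_le_iff minus_minus)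
  with \<open>g (- s) = c\<close> show thesis
    using that[of "- s"] by auto
qed

locale integrable_price = prob_space M for M :: "'a measure" +
  fixes V :: "'a \<Rightarrow> real"
  assumes integrable_V: "integrable M V"
begin

definition truncated_mean :: "real \<Rightarrow> real" where
  "truncated_mean u = (\<integral>x. min (V x) u \<partial>M)"

lemma integrable_min [simp]: "integrable M (\<lambda>x. min (V x) u)"
  using integrable_V by auto

lemma truncated_mean_mono: "a \<le> b \<Longrightarrow> truncated_mean a \<le> truncated_mean b"
  unfolding truncated_mean_def by (intro integral_mono) auto

lemma truncated_mean_increment_le:
  assumes "a \<le> b"
  shows "truncated_mean b \<le> truncated_mean a + (b - a)"
proof -
  have "truncated_mean b \<le> (\<integral>x. min (V x) a + (b - a) \<partial>M)"
    unfolding truncated_mean_def using assms by (intro integral_mono) auto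
  also have "\<dots> = truncated_mean a + (b - a)"
    using Bochner_Integration.integral_add[of M "\<lambda>x. min (V x) a" "\<lambda>x. b - a"]
    by (simp add: truncated_mean_def prob_space)
  finally show ?thesis .
qed

lemma continuous_truncated_mean: "continuous_on UNIV truncated_mean"
proof (rule lipschitz_on_continuous_on)
  have "dist (truncated_mean a) (truncated_mean b) \<le> 1 * dist a b" for a b
    using truncated_mean_mono[of a b] truncated_mean_mono[of b a]
      truncated_mean_increment_le[of a b] truncated_mean_increment_le[of b a]
    by (cases "a \<le> b") (auto simp: dist_real_def)
  then show "1-lipschitz_on UNIV truncated_mean"
    by (intro lipschitz_onI) auto
qed

lemma truncated_mean_le: "truncated_mean u \<le> u"
proof -
  have "truncated_mean u \<le> (\<integral>x. u \<partial>M)"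
    unfolding truncated_mean_def by (intro integral_mono) auto
  then show ?thesis
    by (simp add: prob_space)
qed

lemma truncated_mean_le_mean: "truncated_mean u \<le> expectation V"
  unfolding truncated_mean_def using integrable_V by (intro integral_mono) auto

lemma integral_shortfall: "(\<integral>x. max (u - V x) 0 \<partial>M) = u - truncated_mean u"
proof -
  have "(\<integral>x. max (u - V x) 0 \<partial>M) = (\<integral>x. u - min (V x) u \<partial>M)"
    by (intro Bochner_Integration.integral_cong) auto
  then show ?thesis
    using Bochner_Integration.integral_diff[of M "\<lambda>x. u" "\<lambda>x. min (V x) u"]
    by (simp add: truncated_mean_def prob_space)
qed

lemma integral_excess: "(\<integral>x. max (V x - u) 0 \<partial>M) = expectation V - truncated_mean u"
proof -
  have "(\<integral>x. max (V x - u) 0 \<partial>M) = (\<integral>x. V x - min (V x) u \<partial>M)"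
    by (intro Bochner_Integration.integral_cong) auto
  then show ?thesis
    using Bochner_Integration.integral_diff[OF integrable_V integrable_min] by (simp add: truncated_mean_def)
qed

lemma integral_min_max_less:
  assumes "u < s"
  shows "(\<integral>x. min (max (V x) u) s \<partial>M) = truncated_mean s + (u - truncated_mean u)"
proof -
  have "(\<integral>x. min (max (V x) u) s \<partial>M) = (\<integral>x. min (V x) s + max (u - V x) 0 \<partial>M)"
    using assms by (intro Bochner_Integration.integral_cong) (auto simp: min_def max_def)
  also have "\<dots> = truncated_mean s + (\<integral>x. max (u - V x) 0 \<partial>M)"
    using Bochner_Integration.integral_add[OF integrable_min, of "\<lambda>x. max (u - V x) 0"] integrable_V
    by (simp add: truncated_mean_def)
  finally show ?thesis
    unfolding integral_shortfall .
qed

lemma integral_min_max_ge: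
  assumes "s \<le> u"
  shows "(\<integral>x. min (max (V x) u) s \<partial>M) = s"
proof -
  have "(\<integral>x. min (max (V x) u) s \<partial>M) = (\<integral>x. s \<partial>M)"
    using assms by (intro Bochner_Integration.integral_cong) (auto simp: min_def max_def)
  then show ?thesis
    by (simp add: prob_space)
qed

lemma truncated_mean_zero:
  assumes "\<And>x. x \<in> space M \<Longrightarrow> 0 \<le> V x"
  shows "truncated_mean 0 = 0"
proof -
  have "truncated_mean 0 = (\<integral>x. 0 \<partial>M)"
    unfolding truncated_mean_def using assms by (intro Bochner_Integration.integral_cong) auto
  then show ?thesis
    by simp
qed

lemma rsv_price_eq:
  assumes "\<And>x. x \<in> space M \<Longrightarrow> 0 \<le> V x" "0 \<le> c"
  obtains u where "rsv_price M V c = ereal u" "u - truncated_mean u = c"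
    "\<And>s. s - truncated_mean s \<le> c \<longleftrightarrow> s \<le> u"
proof -
  have "mono (\<lambda>s. s - truncated_mean s)"
  proof (rule monoI)
    fix a b :: real assume "a \<le> b"
    then show "a - truncated_mean a \<le> b - truncated_mean b"
      using truncated_mean_increment_le[of a b] by linarith
  qed
  moreover have "continuous_on UNIV (\<lambda>s. s - truncated_mean s)"
    by (intro continuous_on_diff continuous_on_id continuous_truncated_mean)
  moreover have "0 - truncated_mean 0 \<le> c"
    using assms by (simp add: truncated_mean_zero)
  moreover have "bdd_above {s. s - truncated_mean s \<le> c}"
    using truncated_mean_le_mean
    by (intro bdd_aboveI[where M = "c + expectation V"]) (smt (verit) mem_Collect_eq)
  ultimately obtain u where u: "u - truncated_mean u = c"
    "{s. s - truncated_mean s \<le> c} = {..u}"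
    by (rule sublevel_set_eq_atMost)
  then have iff: "s - truncated_mean s \<le> c \<longleftrightarrow> s \<le> u" for s
    by blast
  have "{ereal s | s. (\<integral>x. max (s - V x) 0 \<partial>M) \<le> c} = ereal ` {..u}"
    by (auto simp: integral_shortfall iff)
  moreover have "Sup (ereal ` {..u}) = ereal u"
    by (rule Sup_eqI) auto
  ultimately have "rsv_price M V c = ereal u"
    by (simp add: rsv_price_def)
  with u(1) iff that show thesis
    by blast
qed

lemma bkp_price_cases:
  obtains (infinite) "bkp_price M V c = \<infinity>" "\<And>s. c < expectation V - truncated_mean s"
  | (finite) b where "bkp_price M V c = ereal b" "expectation V - truncated_mean b = c"
    "\<And>s. expectation V - truncated_mean s \<le> c \<longleftrightarrow> b \<le> s"
proof (cases "\<exists>a. expectation V - truncated_mean a \<le> c")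
  case False
  then have "{ereal s | s. (\<integral>x. max (V x - s) 0 \<partial>M) \<le> c} = {}"
    by (simp add: integral_excess)
  then have "bkp_price M V c = \<infinity>"
    by (simp add: bkp_price_def top_ereal_def)
  then show thesis
    using False by (intro infinite) (simp_all add: not_le)
next
  case True
  then obtain a where "expectation V - truncated_mean a \<le> c"
    by blast
  moreover have "antimono (\<lambda>s. expectation V - truncated_mean s)"
    using truncated_mean_mono by (auto intro!: antimonoI)
  moreover have "continuous_on UNIV (\<lambda>s. expectation V - truncated_mean s)"
    by (intro continuous_on_diff continuous_on_const continuous_truncated_mean)
  moreover have "bdd_below {s. expectation V - truncated_mean s \<le> c}"
    using truncated_mean_le
    by (intro bdd_belowI[where m = "expectation V - c"]) (smt (verit) mem_Collect_eq)
  ultimately obtain b where b: "expectation V - truncated_mean b = c"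
    "{s. expectation V - truncated_mean s \<le> c} = {b..}"
    using sublevel_set_eq_atLeast by blast
  then have iff: "expectation V - truncated_mean s \<le> c \<longleftrightarrow> b \<le> s" for s
    by blast
  have "{ereal s | s. (\<integral>x. max (V x - s) 0 \<partial>M) \<le> c} = ereal ` {b..}"
    by (auto simp: integral_excess iff)
  moreover have "Inf (ereal ` {b..}) = ereal b"
    by (rule Inf_eqI) auto
  ultimately have "bkp_price M V c = ereal b"
    by (simp add: bkp_price_def)
  with b(1) iff finite show thesis
    by blast
qed

lemma integral_min_max_reservation:
  assumes u: "u - truncated_mean u = c" and rsv: "\<And>s. s - truncated_mean s \<le> c \<longleftrightarrow> s \<le> u"
  shows "(\<integral>x. min (max (V x) u) r \<partial>M) = min (c + truncated_mean r) r"
proof (cases "r \<le> u")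
  case True
  then show ?thesis
    using rsv[of r] integral_min_max_ge[OF True] by simp
next
  case False
  then show ?thesis
    using rsv[of r] u integral_min_max_less[of u r] by simp
qed

lemma integral_min_max_reservation_backup:
  assumes u: "u - truncated_mean u = c" and rsv: "\<And>s. s - truncated_mean s \<le> c \<longleftrightarrow> s \<le> u"
    and b: "expectation V - truncated_mean b = c"
    and bkp: "\<And>s. expectation V - truncated_mean s \<le> c \<longleftrightarrow> b \<le> s"
    and "u < b"
  shows "(\<integral>x. min (min (max (V x) u) b) r \<partial>M) = min (min (c + truncated_mean r) r) (expectation V)"
proof (cases "r \<le> b")
  case True
  then have "(\<integral>x. min (min (max (V x) u) b) r \<partial>M) = (\<integral>x. min (max (V x) u) r \<partial>M)"
    by (intro Bochner_Integration.integral_cong) auto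
  moreover have "c + truncated_mean r \<le> expectation V"
    using truncated_mean_mono[OF True] b by linarith
  ultimately show ?thesis
    using integral_min_max_reservation[OF u rsv] by simp
next
  case False
  then have "(\<integral>x. min (min (max (V x) u) b) r \<partial>M) = (\<integral>x. min (max (V x) u) b \<partial>M)"
    by (intro Bochner_Integration.integral_cong) auto
  moreover have "expectation V < b"
    using rsv[of b] b \<open>u < b\<close> by linarith
  moreover have "expectation V \<le> c + truncated_mean r"
    using bkp[of r] False by linarith
  ultimately show ?thesis
    using integral_min_max_reservation[OF u rsv, of b] rsv[of b] b \<open>u < b\<close> False by simp
qed

lemma integral_min_W_NOI:
  assumes "rsv_price M V c = ereal u" "u - truncated_mean u = c"
    and rsv: "\<And>s. s - truncated_mean s \<le> c \<longleftrightarrow> s \<le> u"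
  shows "(\<integral>x. min (W_NOI M V c x) r \<partial>M) = min (min (c + truncated_mean r) r) (expectation V)"
proof (cases rule: bkp_price_cases[of c])
  case infinite
  then have "W_NOI M V c x = max (V x) u" for x
    using assms(1) by (simp add: W_NOI_def max_def)
  then show ?thesis
    using integral_min_max_reservation[OF assms(2) rsv] infinite(2)[of r] by simp
next
  case (finite b)
  show ?thesis
  proof (cases "u < b")
    case True
    then have "W_NOI M V c x = min (max (V x) u) b" for x
      using assms(1) finite(1) by (simp add: W_NOI_def max_def min_def)
    then show ?thesis
      using integral_min_max_reservation_backup[OF assms(2) rsv finite(2,3) True] by simp
  next
    case False
    then have "W_NOI M V c x = expectation V" for x
      using assms(1) finite(1) by (simp add: W_NOI_def)
    moreover have "min (expectation V) r \<le> min (c + truncated_mean r) r"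
      using rsv[of r] finite(3)[of r] False by (cases "r \<le> u") auto
    ultimately show ?thesis
      by (simp add: prob_space)
  qed
qed

end

theorem mainTheorem1:
  fixes M :: "'a measure" and V :: "'a \<Rightarrow> real" and c r :: real
  assumes "prob_space M"
    and "V \<in> borel_measurable M"
    and "integrable M V"
    and "\<forall>x\<in>space M. V x \<ge> 0"
    and "c \<ge> 0"
  shows "min (c + (\<integral>x. min (V x) r \<partial>M)) r = (\<integral>x. min (W_OI M V c x) r \<partial>M)
       \<and> min (min (c + (\<integral>x. min (V x) r \<partial>M)) r) (\<integral>x. V x \<partial>M)
           = (\<integral>x. min (W_NOI M V c x) r \<partial>M)"
proof -
  interpret integrable_price M V
    using assms(1,3) by (intro integrable_price.intro integrable_price_axioms.intro)
  obtain u where rsv: "rsv_price M V c = ereal u" "u - truncated_mean u = c"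
    "\<And>s. s - truncated_mean s \<le> c \<longleftrightarrow> s \<le> u"
    using rsv_price_eq assms(4,5) by blast
  have "W_OI M V c x = max (V x) u" for x
    by (simp add: W_OI_def rsv(1) max_def)
  then show ?thesis
    using integral_min_max_reservation[OF rsv(2,3), of r] integral_min_W_NOI[OF rsv, of r]
    by (simp add: truncated_mean_def)
qed

end
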